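(* Let $n = 3$. Suppose $(\mu, \Sigma)$ and $(\mu', \Sigma')$ both satisfy the normalization below. Let $X \sim \mathcal{N}(\mu, \Sigma)$ and $X' \sim \mathcal{N}(\mu', \Sigma')$, and suppose that for every permutation $(i,j,k)$ of $\{1,2,3\}$, $$\Pr\{X_i \geq X_j \geq X_k\} = \Pr\{X'_i \geq X'_j \geq X'_k\}.$$ Then $\mu = \mu'$ and $\Sigma = \Sigma'$. In words, $(\mu,\Sigma)$ is uniquely identifiable from the three-way observation probabilities.
   Context: Probit model: utilities $X \sim \mathcal{N}(\mu, \Sigma)$ with $\mu \in \mathbb{R}^n$ and $\Sigma$ symmetric positive semidefinite. Normalization: $\langle \mu, \mathbf{1}\rangle = 0$, $\Sigma\mathbf{1} = 0$, $\operatorname{Tr}(\Sigma) = n$, and $\operatorname{rank}(\Sigma) = n-1$. The three-way observation probabilities are the probabilities of each of the six orderings of $(X_1, X_2, X_3)$. *)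

theory Defs
  imports "HOL-Probability.Probability"
begin

definition std_gauss3 :: "(real^3) measure" where
  "std_gauss3 = distr (PiM UNIV (\<lambda>_::3. density lborel std_normal_density)) borel
                      (\<lambda>f. \<chi> i. f i)"

text \<open>Gaussian law N(mu, A A^T): the law of X = mu + A Z with Z standard normal.\<close>
definition gauss3 :: "real^3 \<Rightarrow> real^3^3 \<Rightarrow> (real^3) measure" where
  "gauss3 mu A = distr std_gauss3 borel (\<lambda>z. mu + A *v z)"

definition ord_prob :: "real^3 \<Rightarrow> real^3^3 \<Rightarrow> 3 \<Rightarrow> 3 \<Rightarrow> 3 \<Rightarrow> real" where
  "ord_prob mu A i j k = measure (gauss3 mu A) {x. x$i \<ge> x$j \<and> x$j \<ge> x$k}"

definition normalized3 :: "real^3 \<Rightarrow> real^3^3 \<Rightarrow> bool" where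
  "normalized3 mu S \<longleftrightarrow>
     transpose S = S \<and> (\<forall>x. 0 \<le> x \<bullet> (S *v x)) \<and>
     (\<Sum>i\<in>UNIV. mu $ i) = 0 \<and> S *v (\<chi> i. 1) = 0 \<and>
     trace S = 3 \<and> rank S = 2"

end

theory Submission
  imports Defs
begin

(* Write X = mu + A Z with Z standard normal. The event X_i >= X_j is the half-space
   {(A_i - A_j) . Z >= mu_j - mu_i} and X_i >= X_j >= X_k is the intersection of two such
   half-spaces. By the rotation invariance of Z, the probability of {a . Z >= c} with |a| = 1
   is a strictly decreasing function of c alone, and for fixed thresholds the probability of a
   wedge {a . Z >= c, b . Z >= c'} with unit a, b is a strictly increasing function of a . b.
   Since ties have probability zero, P(X_i >= X_j) is a sum of three ordering probabilities;
   hence the data determine the standardized gaps (mu_j - mu_i) / |A_i - A_j| and then the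
   cosines of the angles of the triangle A_1 A_2 A_3. Rank 2 makes this triangle
   non-degenerate, so its angles fix it up to similarity and the trace fixes its size. As the
   rows of A sum to zero, the side lengths determine S = A A^T, and the gaps together with
   sum mu = 0 determine mu. *)

section \<open>The standard Gaussian measure on real^n\<close>

definition std_gauss :: "(real^'n) measure" where
  "std_gauss = distr (PiM UNIV (\<lambda>_::'n. std_normal_distribution)) borel vec_lambda"

lemma std_gauss3_eq_std_gauss: "std_gauss3 = std_gauss"
  by (simp add: std_gauss3_def std_gauss_def)

lemma PiM_std_normal_eq_density:
  fixes I :: "'i set"
  assumes "finite I"
  shows "PiM I (\<lambda>_. std_normal_distribution) =
    density (PiM I (\<lambda>_. lborel)) (\<lambda>f. \<Prod>i\<in>I. ennreal (std_normal_density (f i)))"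
proof -
  interpret N: product_sigma_finite "\<lambda>_. std_normal_distribution"
    unfolding product_sigma_finite_def
    using prob_space_imp_sigma_finite[OF prob_space_normal_density] by auto
  interpret L: product_sigma_finite "\<lambda>_. lborel :: real measure"
    unfolding product_sigma_finite_def by (auto intro: lborel.sigma_finite_measure_axioms)
  show ?thesis
  proof (rule N.PiM_eqI[symmetric, OF assms])
    fix A :: "'i \<Rightarrow> real set" assume A: "\<And>i. i \<in> I \<Longrightarrow> A i \<in> sets std_normal_distribution"
    then have [measurable]: "i \<in> I \<Longrightarrow> A i \<in> sets borel" for i by auto
    have "PiE I A \<in> sets (PiM I (\<lambda>_. lborel))"
      using A by (intro sets_PiM_I_finite assms) auto
    then have "emeasure (density (PiM I (\<lambda>_. lborel))
        (\<lambda>f. \<Prod>i\<in>I. ennreal (std_normal_density (f i)))) (PiE I A)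
      = (\<integral>\<^sup>+ f. (\<Prod>i\<in>I. ennreal (std_normal_density (f i))) * indicator (PiE I A) f
          \<partial>PiM I (\<lambda>_. lborel))"
      by (rule emeasure_density[rotated]) measurable
    also have "\<dots> = (\<integral>\<^sup>+ f. (\<Prod>i\<in>I. ennreal (std_normal_density (f i)) * indicator (A i) (f i))
        \<partial>PiM I (\<lambda>_. lborel))"
      by (intro nn_integral_cong)
         (simp add: prod.distrib indicator_def PiE_iff space_PiM prod_ennreal assms)
    also have "\<dots> = (\<Prod>i\<in>I. \<integral>\<^sup>+ x. ennreal (std_normal_density x) * indicator (A i) x \<partial>lborel)"
      using assms by (rule L.product_nn_integral_prod) auto
    also have "\<dots> = (\<Prod>i\<in>I. emeasure std_normal_distribution (A i))"
      using A by (intro prod.cong refl) (simp add: emeasure_density)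
    finally show "emeasure (density (PiM I (\<lambda>_. lborel))
        (\<lambda>f. \<Prod>i\<in>I. ennreal (std_normal_density (f i)))) (PiE I A)
      = (\<Prod>i\<in>I. emeasure std_normal_distribution (A i))" .
  qed (simp only: sets_density, intro sets_PiM_cong; simp)
qed

lemma measurable_vec_lambda_lborel [measurable]:
  "(vec_lambda :: ('n::finite \<Rightarrow> real) \<Rightarrow> real^'n) \<in> PiM UNIV (\<lambda>_. lborel) \<rightarrow>\<^sub>M borel"
proof (subst borel_measurable_euclidean_space, intro ballI)
  fix b :: "real^'n" assume "b \<in> Basis"
  then obtain i where "b = axis i 1" by (auto simp: Basis_vec_def)
  then have "(\<lambda>x. vec_lambda x \<bullet> b) = (\<lambda>x. x i)"
    by (simp add: inner_axis)
  then show "(\<lambda>x. vec_lambda x \<bullet> b) \<in> borel_measurable (PiM UNIV (\<lambda>_. lborel))"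
    by simp
qed

lemma distr_vec_lambda_lborel:
  "distr (PiM UNIV (\<lambda>_. lborel)) borel vec_lambda = (lborel :: (real^'n::finite) measure)"
proof (rule lborel_eqI[symmetric])
  interpret L: product_sigma_finite "\<lambda>_::'n. lborel :: real measure"
    unfolding product_sigma_finite_def by (auto intro: lborel.sigma_finite_measure_axioms)
  fix l u :: "real^'n" assume le: "\<And>b. b \<in> Basis \<Longrightarrow> l \<bullet> b \<le> u \<bullet> b"
  have axis: "l$i \<le> u$i" for i
    using le[of "axis i 1"] by (auto simp: Basis_vec_def inner_axis)
  have Basis_eq: "Basis = (\<lambda>i. axis i (1::real)) ` (UNIV :: 'n set)"
    by (auto simp: Basis_vec_def)
  have "vec_lambda -` box l u \<inter> space (PiM UNIV (\<lambda>_. lborel)) = PiE UNIV (\<lambda>i. {l$i<..<u$i})"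
    by (auto simp: mem_box_cart space_PiM PiE_iff)
  then have "emeasure (distr (PiM UNIV (\<lambda>_. lborel)) borel vec_lambda) (box l u)
      = emeasure (PiM UNIV (\<lambda>_. lborel)) (PiE UNIV (\<lambda>i. {l$i<..<u$i}))"
    by (subst emeasure_distr) auto
  also have "\<dots> = (\<Prod>i\<in>UNIV. ennreal (u$i - l$i))"
    using axis by (subst L.emeasure_PiM) auto
  also have "\<dots> = ennreal (\<Prod>b\<in>Basis. (u - l) \<bullet> b)"
    using axis by (simp add: Basis_eq prod.reindex inj_on_def axis_eq_axis inner_axis prod_ennreal)
  finally show "emeasure (distr (PiM UNIV (\<lambda>_. lborel)) borel vec_lambda) (box l u)
      = (\<Prod>b\<in>Basis. (u - l) \<bullet> b)" .
qed simp

definition std_gauss_density :: "real^'n \<Rightarrow> real" where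
  "std_gauss_density x = (\<Prod>i\<in>UNIV. std_normal_density (x$i))"

lemma std_gauss_density_pos: "0 < std_gauss_density x"
  by (simp add: std_gauss_density_def normal_density_pos prod_pos)

lemma std_gauss_density_norm:
  "std_gauss_density (x::real^'n::finite) = (1 / sqrt (2 * pi)) ^ CARD('n) * exp (- (norm x)\<^sup>2 / 2)"
proof -
  have "(norm x)\<^sup>2 = (\<Sum>i\<in>UNIV. (x$i)\<^sup>2)"
    unfolding power2_norm_eq_inner by (simp add: inner_vec_def power2_eq_square)
  then have "(norm x)\<^sup>2 / 2 = (\<Sum>i\<in>UNIV. (x$i)\<^sup>2 / 2)"
    by (simp add: sum_divide_distrib)
  then have "exp (- (norm x)\<^sup>2 / 2) = (\<Prod>i\<in>UNIV. exp (- (x$i)\<^sup>2 / 2))"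
    by (simp add: exp_sum[symmetric] sum_negf)
  then show ?thesis
    unfolding std_gauss_density_def std_normal_density_def prod.distrib by simp
qed

lemma borel_measurable_std_gauss_density [measurable]: "std_gauss_density \<in> borel_measurable borel"
  unfolding std_gauss_density_def by measurable

lemma std_gauss_eq_density:
  "std_gauss = density lborel (\<lambda>x::real^'n::finite. ennreal (std_gauss_density x))"
proof -
  have "density lborel (\<lambda>x::real^'n. ennreal (std_gauss_density x))
      = density (distr (PiM UNIV (\<lambda>_. lborel)) borel vec_lambda) (\<lambda>x. ennreal (std_gauss_density x))"
    by (simp add: distr_vec_lambda_lborel)
  also have "\<dots> = distr (density (PiM UNIV (\<lambda>_. lborel))
      (\<lambda>f. ennreal (std_gauss_density (vec_lambda f)))) borel vec_lambda"
    by (rule density_distr) measurable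
  also have "(\<lambda>f. ennreal (std_gauss_density (vec_lambda f :: real^'n)))
      = (\<lambda>f. \<Prod>i\<in>UNIV. ennreal (std_normal_density (f i)))"
    by (simp add: std_gauss_density_def prod_ennreal)
  finally show ?thesis
    by (simp add: std_gauss_def PiM_std_normal_eq_density)
qed

lemma prob_space_std_gauss: "prob_space (std_gauss :: (real^'n::finite) measure)"
proof -
  have "prob_space (PiM UNIV (\<lambda>_::'n. std_normal_distribution))"
    by (rule prob_space_PiM) (simp add: prob_space_normal_density)
  moreover have "sets (PiM UNIV (\<lambda>_::'n. std_normal_distribution)) = sets (PiM UNIV (\<lambda>_. lborel))"
    by (intro sets_PiM_cong) auto
  then have "vec_lambda \<in> PiM UNIV (\<lambda>_::'n. std_normal_distribution) \<rightarrow>\<^sub>M borel"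
    using measurable_vec_lambda_lborel measurable_cong_sets by blast
  ultimately show ?thesis
    unfolding std_gauss_def by (rule prob_space.prob_space_distr)
qed

interpretation std_gauss: prob_space "std_gauss :: (real^'n::finite) measure"
  by (rule prob_space_std_gauss)

lemma sets_std_gauss [simp, measurable_cong]: "sets std_gauss = sets borel"
  by (simp add: std_gauss_def)

lemma space_std_gauss [simp]: "space std_gauss = UNIV"
  by (simp add: std_gauss_def)

section \<open>Rotation invariance and positivity\<close>

lemma borel_measurable_orthogonal_transformation:
  fixes f :: "'a::euclidean_space \<Rightarrow> 'a"
  shows "orthogonal_transformation f \<Longrightarrow> f \<in> borel_measurable borel"
  by (intro borel_measurable_continuous_onI linear_continuous_on
      linear_conv_bounded_linear[THEN iffD1] orthogonal_transformation_linear)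

lemma distr_lborel_orthogonal_transformation:
  fixes f :: "real^'n::{finite,wellorder} \<Rightarrow> real^'n::_"
  assumes f: "orthogonal_transformation f"
  shows "distr lborel borel f = lborel"
proof (rule lborel_eqI[symmetric])
  have [measurable]: "f \<in> borel_measurable borel"
    using f by (rule borel_measurable_orthogonal_transformation)
  fix l u :: "real^'n::{finite,wellorder}"
  assume le: "\<And>b. b \<in> Basis \<Longrightarrow> l \<bullet> b \<le> u \<bullet> b"
  have vimage_eq: "f -` box l u = inv f ` box l u"
    using f by (simp add: bij_vimage_eq_inv_image orthogonal_transformation_bij)
  have borel: "f -` box l u \<in> sets borel"
    using measurable_sets_borel[of f borel "box l u"] by simp
  have "emeasure (distr lborel borel f) (box l u) = emeasure lebesgue (inv f ` box l u)"
    using borel by (simp add: emeasure_distr vimage_eq[symmetric])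
  also have "\<dots> = ennreal (measure lebesgue (inv f ` box l u))"
    using f by (intro emeasure_eq_measure2 measurable_orthogonal_image orthogonal_transformation_inv)
       auto
  also have "\<dots> = ennreal (measure lebesgue (box l u))"
    using f by (simp add: measure_orthogonal_image orthogonal_transformation_inv)
  also have "\<dots> = emeasure lborel (box l u)"
    by (simp add: emeasure_eq_measure2[symmetric])
  finally show "emeasure (distr lborel borel f) (box l u) = (\<Prod>b\<in>Basis. (u - l) \<bullet> b)"
    using le by (simp add: emeasure_lborel_box_eq)
qed simp

lemma measure_std_gauss_orthogonal_vimage:
  fixes f :: "real^'n::{finite,wellorder} \<Rightarrow> real^'n::_"
  assumes f: "orthogonal_transformation f" and [measurable]: "E \<in> sets borel"
  shows "measure std_gauss (f -` E) = measure std_gauss E"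
proof -
  have [measurable]: "f \<in> borel_measurable borel"
    using f by (rule borel_measurable_orthogonal_transformation)
  have density_f: "std_gauss_density (f x) = std_gauss_density x" for x
    using f by (simp add: std_gauss_density_norm orthogonal_transformation_norm)
  have "emeasure std_gauss (f -` E)
      = (\<integral>\<^sup>+x. ennreal (std_gauss_density x) * indicator (f -` E) x \<partial>lborel)"
    using measurable_sets_borel[of f borel E]
    unfolding std_gauss_eq_density by (subst emeasure_density) auto
  also have "\<dots> = (\<integral>\<^sup>+x. ennreal (std_gauss_density (f x)) * indicator E (f x) \<partial>lborel)"
    by (simp add: density_f indicator_def)
  also have "\<dots> = (\<integral>\<^sup>+y. ennreal (std_gauss_density y) * indicator E y \<partial>distr lborel borel f)"
    by (subst nn_integral_distr) auto
  also have "\<dots> = emeasure std_gauss E"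
    unfolding std_gauss_eq_density distr_lborel_orthogonal_transformation[OF f]
    by (subst emeasure_density) auto
  finally show ?thesis
    by (simp add: measure_def)
qed

lemma measure_std_gauss_open_pos:
  fixes U :: "(real^'n::finite) set"
  assumes U: "open U" and x: "x \<in> U"
  shows "0 < measure std_gauss U"
proof -
  obtain a b where box: "box a b \<subseteq> U" "x \<in> box a b" "\<forall>i\<in>Basis. a \<bullet> i < b \<bullet> i"
    using open_contains_box[OF U x] by blast
  have "emeasure lborel (box a b) \<noteq> 0"
    using box(3) by (auto simp: emeasure_lborel_box_eq inner_diff_left prod_pos less_imp_le)
  then have "\<not> (AE x in lborel. x \<notin> box a b)"
    by (subst AE_iff_measurable[of "box a b"]) auto
  moreover have "x \<notin> box a b"
    if "ennreal (std_gauss_density x) * indicator (box a b) x = 0" for x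
    using that std_gauss_density_pos[of x] by (auto simp: indicator_def split: if_splits)
  ultimately have "\<not> (AE x in lborel. ennreal (std_gauss_density x) * indicator (box a b) x = 0)"
    by (metis (mono_tags, lifting) eventually_mono)
  then have "emeasure std_gauss (box a b) \<noteq> 0"
    by (simp add: std_gauss_eq_density emeasure_density nn_integral_0_iff_AE)
  then have "0 < measure std_gauss (box a b)"
    by (simp add: std_gauss.emeasure_eq_measure zero_less_measure_iff)
  also have "\<dots> \<le> measure std_gauss U"
    using box U by (intro std_gauss.finite_measure_mono) (auto simp: borel_open)
  finally show ?thesis .
qed

lemma measure_std_gauss_strict_mono:
  fixes U :: "(real^'n::finite) set"
  assumes "A \<subseteq> B" "A \<in> sets borel" "B \<in> sets borel" "open U" "x \<in> U" "U \<subseteq> B - A"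
  shows "measure std_gauss A < measure std_gauss B"
proof -
  have "0 < measure std_gauss U"
    using assms by (intro measure_std_gauss_open_pos)
  also have "\<dots> \<le> measure std_gauss (B - A)"
    using assms by (intro std_gauss.finite_measure_mono) auto
  also have "\<dots> = measure std_gauss B - measure std_gauss A"
    using assms by (intro std_gauss.finite_measure_Diff) auto
  finally show ?thesis by simp
qed

lemma hyperplane_null_sets_std_gauss:
  fixes a :: "real^'n::finite"
  assumes "a \<noteq> 0"
  shows "{z. a \<bullet> z = c} \<in> null_sets std_gauss"
proof -
  have "{z. a \<bullet> z = c} \<in> null_sets lebesgue"
    using negligible_hyperplane[of a c] assms by (simp add: negligible_iff_null_sets)
  moreover have "{z. a \<bullet> z = c} \<in> sets borel"
    using closed_hyperplane by (rule borel_closed)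
  ultimately have "{z. a \<bullet> z = c} \<in> null_sets lborel"
    by (simp add: null_sets_def)
  then show ?thesis
    unfolding std_gauss_eq_density
    by (subst null_sets_density_iff) (auto intro: AE_not_in eventually_mono)
qed

section \<open>Reflections and half-spaces\<close>

(* For d = 0 this is the identity (x / 0 = 0), so no lemma below needs d \<noteq> 0. *)
definition reflect_along :: "'a::real_inner \<Rightarrow> 'a \<Rightarrow> 'a" where
  "reflect_along d x = x - (2 * (d \<bullet> x) / (d \<bullet> d)) *\<^sub>R d"

lemma inner_reflect_along: "reflect_along d x \<bullet> y = x \<bullet> reflect_along d y"
  by (simp add: reflect_along_def algebra_simps inner_commute)

lemma reflect_along_reflect_along [simp]: "reflect_along d (reflect_along d x) = x"
  by (cases "d = 0") (simp_all add: reflect_along_def algebra_simps)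

lemma reflect_along_self: "reflect_along d d = - d"
  by (cases "d = 0") (simp_all add: reflect_along_def scaleR_2)

lemma inner_sub_reflect_along:
  "x \<bullet> z - reflect_along d x \<bullet> z = 2 * (d \<bullet> x) * (d \<bullet> z) / (d \<bullet> d)"
  by (simp add: reflect_along_def algebra_simps)

lemma inner_reflect_along_less:
  assumes "0 < d \<bullet> x" "0 < d \<bullet> z"
  shows "reflect_along d x \<bullet> z < x \<bullet> z"
proof -
  have "0 < d \<bullet> d"
    using assms(1) by (cases "d = 0") auto
  then have "0 < 2 * (d \<bullet> x) * (d \<bullet> z) / (d \<bullet> d)"
    using assms by simp
  then show ?thesis
    unfolding inner_sub_reflect_along[symmetric] by simp
qed

lemma orthogonal_transformation_reflect_along: "orthogonal_transformation (reflect_along d)"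
proof -
  have "linear (reflect_along d)"
    by (auto simp: linear_iff reflect_along_def algebra_simps add_divide_distrib)
  moreover have "reflect_along d v \<bullet> reflect_along d w = v \<bullet> w" for v w
    using inner_reflect_along[of d v "reflect_along d w"] by simp
  ultimately show ?thesis
    by (simp add: orthogonal_transformation_def)
qed

lemma reflect_along_swap:
  assumes "norm a = norm b"
  shows "reflect_along (a - b) a = b"
proof (cases "a = b")
  case False
  then have "(a - b) \<bullet> (a - b) \<noteq> 0" by simp
  moreover have "(a - b) \<bullet> (a - b) = 2 * ((a - b) \<bullet> a)"
    using assms by (simp add: algebra_simps inner_commute norm_eq_sqrt_inner)
  ultimately show ?thesis
    by (simp add: reflect_along_def)
qed (simp add: reflect_along_def)

definition halfspace :: "'a::real_inner \<Rightarrow> real \<Rightarrow> 'a set" where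
  "halfspace a c = {x. c \<le> a \<bullet> x}"

lemma halfspace_borel [measurable]: "halfspace a c \<in> sets borel"
  unfolding halfspace_def using closed_halfspace_ge by (rule borel_closed)

lemma vimage_reflect_along_halfspace:
  "reflect_along d -` halfspace a c = halfspace (reflect_along d a) c"
  by (auto simp: halfspace_def inner_reflect_along)

lemma halfspace_sgn:
  assumes "a \<noteq> 0"
  shows "halfspace a c = halfspace (sgn a) (c / norm a)"
proof -
  have "c / norm a \<le> sgn a \<bullet> x \<longleftrightarrow> c \<le> a \<bullet> x" for x
    using assms by (simp add: sgn_div_norm field_simps)
  then show ?thesis
    by (auto simp: halfspace_def)
qed

section \<open>Gaussian measure of half-spaces and wedges\<close>

lemma measure_halfspace_eq_of_norm_eq:
  fixes a b :: "real^'n::{finite,wellorder}"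
  assumes "norm a = norm b"
  shows "measure std_gauss (halfspace a c) = measure std_gauss (halfspace b c)"
proof -
  have "reflect_along (a - b) -` halfspace a c = halfspace b c"
    using assms by (simp add: vimage_reflect_along_halfspace reflect_along_swap)
  then show ?thesis
    using measure_std_gauss_orthogonal_vimage[OF orthogonal_transformation_reflect_along]
    by (metis halfspace_borel)
qed

lemma measure_halfspace_strict_antimono:
  fixes a :: "real^'n::finite"
  assumes "a \<noteq> 0" "c < c'"
  shows "measure std_gauss (halfspace a c') < measure std_gauss (halfspace a c)"
proof (rule measure_std_gauss_strict_mono[where U = "{z. c < a \<bullet> z} \<inter> {z. a \<bullet> z < c'}"
      and x = "((c + c') / 2 / (a \<bullet> a)) *\<^sub>R a"])
  show "open ({z. c < a \<bullet> z} \<inter> {z. a \<bullet> z < c'})"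
    by (intro open_Int open_halfspace_gt open_halfspace_lt)
qed (use assms in \<open>auto simp: halfspace_def\<close>)

lemma threshold_eq_of_measure_halfspace_eq:
  fixes a b :: "real^'n::{finite,wellorder}"
  assumes "a \<noteq> 0" "norm a = norm b"
    and "measure std_gauss (halfspace a c) = measure std_gauss (halfspace b c')"
  shows "c = c'"
proof -
  have "measure std_gauss (halfspace a c) = measure std_gauss (halfspace a c')"
    using assms measure_halfspace_eq_of_norm_eq[of a b c'] by simp
  then show ?thesis
    using measure_halfspace_strict_antimono[OF assms(1), of c c']
      measure_halfspace_strict_antimono[OF assms(1), of c' c]
    by (cases c c' rule: linorder_cases) auto
qed

lemma eventually_less_mult_at_top:
  fixes k :: real
  assumes "0 < k"
  shows "\<forall>\<^sub>F t in at_top. c < t * k"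
  using eventually_gt_at_top[of "c / k"]
  by eventually_elim (use assms in \<open>simp add: field_simps\<close>)

lemma measure_reflected_wedge_less:
  fixes a b b' :: "real^'n::finite"
  assumes norm: "norm b = norm b'" and less: "a \<bullet> b' < a \<bullet> b"
  shows "measure std_gauss (halfspace (reflect_along (b - b') a) c \<inter> halfspace b c' - halfspace b' c')
       < measure std_gauss (halfspace a c \<inter> halfspace b c' - halfspace b' c')"
proof -
  define d where "d = b - b'"
  define a' where "a' = reflect_along d a"
  have ad: "0 < a \<bullet> d"
    using less by (simp add: d_def inner_diff_right)
  have "b \<noteq> b'"
    using less by auto
  moreover have "b \<bullet> b = b' \<bullet> b'"
    using norm by (simp add: norm_eq_sqrt_inner)
  ultimately have bd: "0 < b \<bullet> d" and b'd: "0 < - (b' \<bullet> d)"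
    using inner_gt_zero_iff[of d] by (auto simp: d_def algebra_simps inner_commute)
  have a'd: "a' \<bullet> d = - (a \<bullet> d)"
    by (simp add: a'_def inner_reflect_along reflect_along_self)
  have "\<forall>\<^sub>F t in at_top. \<bar>c\<bar> < t * (a \<bullet> d) \<and> c' < t * (b \<bullet> d) \<and> - c' < t * - (b' \<bullet> d)"
    using ad bd b'd by (intro eventually_conj eventually_less_mult_at_top)
  then obtain t where t: "\<bar>c\<bar> < t * (a \<bullet> d)" "c' < t * (b \<bullet> d)" "- c' < t * - (b' \<bullet> d)"
    using eventually_happens'[OF trivial_limit_at_top_linorder] by blast
  let ?U = "{z. c < a \<bullet> z} \<inter> {z. c' < b \<bullet> z} \<inter> {z. b' \<bullet> z < c'} \<inter> {z. a' \<bullet> z < c}"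
  show ?thesis
    unfolding d_def[symmetric] a'_def[symmetric]
  proof (rule measure_std_gauss_strict_mono[where x = "t *\<^sub>R d" and U = ?U])
    show "halfspace a' c \<inter> halfspace b c' - halfspace b' c'
        \<subseteq> halfspace a c \<inter> halfspace b c' - halfspace b' c'"
    proof
      fix z assume z: "z \<in> halfspace a' c \<inter> halfspace b c' - halfspace b' c'"
      then have "0 < d \<bullet> z"
        by (auto simp: halfspace_def d_def inner_diff_left)
      then have "a' \<bullet> z < a \<bullet> z"
        using ad inner_reflect_along_less[of d a z] by (simp add: a'_def inner_commute)
      then show "z \<in> halfspace a c \<inter> halfspace b c' - halfspace b' c'"
        using z by (auto simp: halfspace_def)
    qed
    show "open ?U"
      by (intro open_Int open_halfspace_gt open_halfspace_lt)
  qed (use t a'd in \<open>auto simp: halfspace_def\<close>)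
qed

(* The reflection exchanging b and b' carries the part of the b'-wedge outside halfspace b
   into a proper part of the b-wedge outside halfspace b'; the two wedges share the rest. *)
lemma measure_wedge_strict_mono:
  fixes a b b' :: "real^'n::{finite,wellorder}"
  assumes "norm b = norm b'" and "a \<bullet> b' < a \<bullet> b"
  shows "measure std_gauss (halfspace a c \<inter> halfspace b' c')
       < measure std_gauss (halfspace a c \<inter> halfspace b c')"
proof -
  define R where "R = reflect_along (b - b')"
  have Rb: "R b = b'"
    using assms(1) by (simp add: R_def reflect_along_swap)
  then have Rb': "R b' = b"
    by (metis R_def reflect_along_reflect_along)
  let ?W = "halfspace a c \<inter> halfspace b c'" and ?W' = "halfspace a c \<inter> halfspace b' c'"
  let ?V = "halfspace (R a) c \<inter> halfspace b c' - halfspace b' c'"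
  have "R -` ?V = ?W' - halfspace b c'"
    by (simp add: R_def vimage_Diff vimage_Int vimage_reflect_along_halfspace
        Rb[unfolded R_def] Rb'[unfolded R_def])
  then have "measure std_gauss (?W' - halfspace b c') = measure std_gauss ?V"
    using measure_std_gauss_orthogonal_vimage[of R ?V]
    by (simp add: R_def orthogonal_transformation_reflect_along)
  also have "\<dots> < measure std_gauss (?W - halfspace b' c')"
    unfolding R_def using assms by (rule measure_reflected_wedge_less)
  finally have "measure std_gauss (?W' - halfspace b c') < measure std_gauss (?W - halfspace b' c')" .
  moreover have "?W \<inter> halfspace b' c' = ?W' \<inter> halfspace b c'"
    by blast
  ultimately show ?thesis
    using std_gauss.finite_measure_Diff'[of ?W "halfspace b' c'"]
      std_gauss.finite_measure_Diff'[of ?W' "halfspace b c'"]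
    by simp
qed

lemma inner_eq_of_measure_wedge_eq:
  fixes a b a' b' :: "real^'n::{finite,wellorder}"
  assumes "norm a = norm a'" "norm b = norm b'"
    and eq: "measure std_gauss (halfspace a c \<inter> halfspace b c')
           = measure std_gauss (halfspace a' c \<inter> halfspace b' c')"
  shows "a \<bullet> b = a' \<bullet> b'"
proof -
  define R where "R = reflect_along (a' - a)"
  define b'' where "b'' = R b'"
  have Ra': "R a' = a"
    using assms(1) by (simp add: R_def reflect_along_swap)
  then have Ra: "R a = a'"
    by (metis R_def reflect_along_reflect_along)
  have "norm b'' = norm b"
    using assms(2) orthogonal_transformation_norm[OF orthogonal_transformation_reflect_along]
    by (simp add: b''_def R_def)
  moreover have "a \<bullet> b'' = a' \<bullet> b'"
    by (metis R_def Ra b''_def inner_reflect_along)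
  moreover have "R -` (halfspace a c \<inter> halfspace b'' c') = halfspace a' c \<inter> halfspace b' c'"
    by (simp add: R_def b''_def vimage_reflect_along_halfspace Ra[unfolded R_def])
  then have "measure std_gauss (halfspace a c \<inter> halfspace b c')
      = measure std_gauss (halfspace a c \<inter> halfspace b'' c')"
    using eq measure_std_gauss_orthogonal_vimage[of R "halfspace a c \<inter> halfspace b'' c'"]
    by (simp add: R_def orthogonal_transformation_reflect_along)
  ultimately show ?thesis
    using measure_wedge_strict_mono[where a = a and b = b and b' = b'' and c = c and c' = c']
      measure_wedge_strict_mono[where a = a and b = b'' and b' = b and c = c and c' = c']
    by (cases "a \<bullet> b" "a \<bullet> b''" rule: linorder_cases) auto
qed

section \<open>Triangles and centred point configurations\<close>

lemma triangle_projection_law: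
  fixes u v :: "'a::real_inner"
  shows "norm u + (sgn u \<bullet> sgn v) * norm v = (sgn u \<bullet> sgn (u + v)) * norm (u + v)"
proof -
  have scale: "(sgn x \<bullet> sgn y) * norm y = sgn x \<bullet> y" for x y :: 'a
    by (cases "y = 0") (simp_all add: sgn_div_norm)
  have "sgn u \<bullet> u = norm u"
    by (cases "u = 0") (simp_all add: sgn_div_norm dot_square_norm power2_eq_square)
  then show ?thesis
    by (simp add: scale inner_add_right)
qed

lemma abs_inner_sgn_less_one:
  fixes u v :: "'a::euclidean_space"
  assumes "\<not> collinear {0, u, v}"
  shows "\<bar>sgn u \<bullet> sgn v\<bar> < 1"
proof -
  have "u \<noteq> 0" "v \<noteq> 0"
    using assms by (auto simp: insert_commute)
  moreover have "\<bar>u \<bullet> v\<bar> < norm u * norm v"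
    using assms Cauchy_Schwarz_ineq2[of u v] norm_cauchy_schwarz_equal[of u v] by simp
  moreover have "sgn u \<bullet> sgn v = (u \<bullet> v) / (norm u * norm v)"
    by (simp add: sgn_div_norm divide_inverse mult.commute)
  ultimately show ?thesis
    by (simp add: abs_divide abs_mult)
qed

lemma triangle_sides_proportional:
  fixes u v u' v' :: "'a::real_inner"
  assumes nondegenerate: "(sgn u \<bullet> sgn v)\<^sup>2 \<noteq> 1"
    and \<alpha>: "sgn u \<bullet> sgn v = sgn u' \<bullet> sgn v'"
    and \<beta>: "sgn u \<bullet> sgn (u + v) = sgn u' \<bullet> sgn (u' + v')"
    and \<gamma>: "sgn v \<bullet> sgn (u + v) = sgn v' \<bullet> sgn (u' + v')"
  shows "norm u * norm (u' + v') = norm u' * norm (u + v)"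
    and "norm v * norm (u' + v') = norm v' * norm (u + v)"
proof -
  have solve: "(1 - (sgn x \<bullet> sgn y)\<^sup>2) * norm x
      = (sgn x \<bullet> sgn (x + y) - (sgn x \<bullet> sgn y) * (sgn y \<bullet> sgn (x + y))) * norm (x + y)"
    "(1 - (sgn x \<bullet> sgn y)\<^sup>2) * norm y
      = (sgn y \<bullet> sgn (x + y) - (sgn x \<bullet> sgn y) * (sgn x \<bullet> sgn (x + y))) * norm (x + y)"
    for x y :: 'a
  proof -
    have "norm x + (sgn x \<bullet> sgn y) * norm y = (sgn x \<bullet> sgn (x + y)) * norm (x + y)"
      "norm y + (sgn x \<bullet> sgn y) * norm x = (sgn y \<bullet> sgn (x + y)) * norm (x + y)"
      using triangle_projection_law[of x y] triangle_projection_law[of y x]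
      by (simp_all add: inner_commute add.commute)
    then show "(1 - (sgn x \<bullet> sgn y)\<^sup>2) * norm x
        = (sgn x \<bullet> sgn (x + y) - (sgn x \<bullet> sgn y) * (sgn y \<bullet> sgn (x + y))) * norm (x + y)"
      "(1 - (sgn x \<bullet> sgn y)\<^sup>2) * norm y
        = (sgn y \<bullet> sgn (x + y) - (sgn x \<bullet> sgn y) * (sgn x \<bullet> sgn (x + y))) * norm (x + y)"
      by algebra+
  qed
  have nz: "1 - (sgn u \<bullet> sgn v)\<^sup>2 \<noteq> 0"
    using nondegenerate by simp
  show "norm u * norm (u' + v') = norm u' * norm (u + v)"
    using solve(1)[of u v] solve(1)[of u' v'] nz unfolding \<alpha> \<beta> \<gamma>
    by algebra
  show "norm v * norm (u' + v') = norm v' * norm (u + v)"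
    using solve(2)[of u v] solve(2)[of u' v'] nz unfolding \<alpha> \<beta> \<gamma>
    by algebra
qed

lemma triangle_congruent_of_angles_eq:
  fixes a b c a' b' c' :: "'a::euclidean_space"
  assumes noncollinear: "\<not> collinear {a, b, c}"
    and angle_b: "sgn (a - b) \<bullet> sgn (b - c) = sgn (a' - b') \<bullet> sgn (b' - c')"
    and angle_a: "sgn (b - a) \<bullet> sgn (a - c) = sgn (b' - a') \<bullet> sgn (a' - c')"
    and angle_c: "sgn (a - c) \<bullet> sgn (c - b) = sgn (a' - c') \<bullet> sgn (c' - b')"
    and size: "(dist a b)\<^sup>2 + (dist b c)\<^sup>2 + (dist a c)\<^sup>2
      = (dist a' b')\<^sup>2 + (dist b' c')\<^sup>2 + (dist a' c')\<^sup>2"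
  shows "dist a b = dist a' b'" "dist b c = dist b' c'" "dist a c = dist a' c'"
proof -
  have flip: "sgn (y - x) = - sgn (x - y)" for x y :: 'a
    by (metis minus_diff_eq sgn_minus)
  have "\<bar>sgn (a - b) \<bullet> sgn (c - b)\<bar> < 1"
    using noncollinear by (intro abs_inner_sgn_less_one) (simp add: collinear_3)
  then have "(sgn (a - b) \<bullet> sgn (b - c))\<^sup>2 \<noteq> 1"
    by (simp add: flip[of b c] abs_square_eq_1)
  moreover have "(a - b) + (b - c) = a - c" "(a' - b') + (b' - c') = a' - c'"
    by simp_all
  ultimately have prop_ab: "dist a b * dist a' c' = dist a' b' * dist a c"
    and prop_bc: "dist b c * dist a' c' = dist b' c' * dist a c"
    using triangle_sides_proportional[of "a - b" "b - c" "a' - b'" "b' - c'"] angle_b angle_a angle_c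
    by (simp_all add: dist_norm flip[of a b] flip[of a' b'] flip[of b c] flip[of b' c'] inner_commute)
  have "a \<noteq> c"
    using noncollinear by (auto simp: insert_commute)
  then have ac: "0 < dist a c"
    by simp
  let ?s = "(dist a b)\<^sup>2 + (dist b c)\<^sup>2 + (dist a c)\<^sup>2"
  have "?s * (dist a' c')\<^sup>2
      = (dist a b * dist a' c')\<^sup>2 + (dist b c * dist a' c')\<^sup>2 + (dist a c * dist a' c')\<^sup>2"
    by (simp add: power_mult_distrib algebra_simps)
  also have "\<dots> = (dist a c)\<^sup>2 * ((dist a' b')\<^sup>2 + (dist b' c')\<^sup>2 + (dist a' c')\<^sup>2)"
    unfolding prop_ab prop_bc by (simp add: power_mult_distrib algebra_simps)
  also have "\<dots> = ?s * (dist a c)\<^sup>2"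
    by (simp only: size mult.commute)
  finally have "?s * (dist a' c')\<^sup>2 = ?s * (dist a c)\<^sup>2" .
  moreover have "0 < ?s"
    using ac by (intro add_nonneg_pos) auto
  ultimately have "(dist a' c')\<^sup>2 = (dist a c)\<^sup>2"
    by simp
  then show ac_eq: "dist a c = dist a' c'"
    by (simp add: power2_eq_iff_nonneg)
  show "dist a b = dist a' b'" "dist b c = dist b' c'"
    using prop_ab prop_bc ac unfolding ac_eq by auto
qed

lemma sum_dist_sq_centered:
  fixes P :: "'i::finite \<Rightarrow> 'a::real_inner"
  assumes "(\<Sum>i\<in>UNIV. P i) = 0"
  shows "(\<Sum>j\<in>UNIV. (dist (P i) (P j))\<^sup>2) = CARD('i) * (norm (P i))\<^sup>2 + (\<Sum>j\<in>UNIV. (norm (P j))\<^sup>2)"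
proof -
  have "(dist (P i) (P j))\<^sup>2 = (norm (P i))\<^sup>2 + (norm (P j))\<^sup>2 - 2 * (P i \<bullet> P j)" for j
    by (simp add: dist_norm power2_norm_eq_inner inner_diff algebra_simps inner_commute)
  moreover have "(\<Sum>j\<in>UNIV. P i \<bullet> P j) = 0"
    using assms by (simp add: inner_sum_right[symmetric])
  ultimately show ?thesis
    by (simp add: sum.distrib sum_subtractf sum_distrib_left[symmetric])
qed

lemma sum_sum_dist_sq_centered:
  fixes P :: "'i::finite \<Rightarrow> 'a::real_inner"
  assumes "(\<Sum>i\<in>UNIV. P i) = 0"
  shows "(\<Sum>i\<in>UNIV. \<Sum>j\<in>UNIV. (dist (P i) (P j))\<^sup>2) = 2 * CARD('i) * (\<Sum>i\<in>UNIV. (norm (P i))\<^sup>2)"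
  by (simp add: sum_dist_sq_centered[OF assms] sum.distrib sum_distrib_left mult.assoc)

lemma inner_eq_of_dist_eq_centered:
  fixes P Q :: "'i::finite \<Rightarrow> 'a::real_inner"
  assumes P: "(\<Sum>i\<in>UNIV. P i) = 0" and Q: "(\<Sum>i\<in>UNIV. Q i) = 0"
    and dist: "\<And>i j. dist (P i) (P j) = dist (Q i) (Q j)"
  shows "P i \<bullet> P j = Q i \<bullet> Q j"
proof -
  have "(\<Sum>i\<in>UNIV. (norm (P i))\<^sup>2) = (\<Sum>i\<in>UNIV. (norm (Q i))\<^sup>2)"
    using sum_sum_dist_sq_centered[OF P] sum_sum_dist_sq_centered[OF Q] by (simp add: dist)
  then have norm: "(norm (P k))\<^sup>2 = (norm (Q k))\<^sup>2" for k
    using sum_dist_sq_centered[OF P, of k] sum_dist_sq_centered[OF Q, of k] by (simp add: dist)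
  have polar: "x \<bullet> y = ((norm x)\<^sup>2 + (norm y)\<^sup>2 - (dist x y)\<^sup>2) / 2" for x y :: 'a
    by (simp add: dist_norm power2_norm_eq_inner inner_diff inner_commute)
  show ?thesis
    unfolding polar[of "P i"] polar[of "Q i"] by (simp add: norm dist)
qed

lemma vec_eq_of_sum_eq_of_diff_eq:
  fixes x y :: "real^'n"
  assumes sum: "(\<Sum>i\<in>UNIV. x$i) = (\<Sum>i\<in>UNIV. y$i)" and diff: "\<And>i j. x$j - x$i = y$j - y$i"
  shows "x = y"
proof -
  have "x$k = y$k" for k
  proof -
    have "(\<Sum>i\<in>UNIV. x$i - y$i) = (\<Sum>i\<in>(UNIV :: 'n set). x$k - y$k)"
    proof (rule sum.cong[OF refl])
      show "x$i - y$i = x$k - y$k" for i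
        using diff[of k i] by linarith
    qed
    moreover have "(\<Sum>i\<in>UNIV. x$i - y$i) = 0"
      using sum by (simp add: sum_subtractf)
    ultimately show ?thesis
      by simp
  qed
  then show ?thesis
    by (simp add: vec_eq_iff)
qed

section \<open>The probit model with three alternatives\<close>

lemma matrix_mult_transpose_nth: "(A ** transpose A)$i$j = A$i \<bullet> A$j"
  by (simp add: matrix_mult_transpose_dot_row row_def vec_lambda_eta)

lemma normalized3_rows_centered:
  assumes "normalized3 mu S" and "A ** transpose A = S"
  shows "(\<Sum>i\<in>UNIV. A$i) = 0"
proof -
  define t where "t = (\<Sum>i\<in>UNIV. A$i)"
  have "A$i \<bullet> t = (S *v (\<chi> i. 1))$i" for i
  proof -
    have "A$i \<bullet> t = (\<Sum>j\<in>UNIV. (A ** transpose A)$i$j)"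
      by (simp add: t_def inner_sum_right matrix_mult_transpose_nth)
    then show ?thesis
      using assms(2) by (simp add: matrix_vector_mul_component inner_vec_def)
  qed
  then have "A$i \<bullet> t = 0" for i
    using assms(1) by (simp add: normalized3_def)
  then have "t \<bullet> t = 0"
    by (simp add: t_def inner_sum_left)
  then show ?thesis
    by (simp add: t_def)
qed

lemma normalized3_rows_norm_sum:
  assumes "normalized3 mu S" and "A ** transpose A = S"
  shows "(\<Sum>i\<in>UNIV. (norm (A$i))\<^sup>2) = 3"
  using assms by (simp add: normalized3_def trace_def power2_norm_eq_inner
      matrix_mult_transpose_nth[symmetric])

lemma normalized3_rows_not_collinear:
  assumes "normalized3 mu S" and "A ** transpose A = S"
  shows "\<not> collinear {A$1, A$2, A$3}"
proof
  assume "collinear {A$1, A$2, A$3}"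
  then obtain w where w: "\<And>x y. x \<in> {A$1, A$2, A$3} \<Longrightarrow> y \<in> {A$1, A$2, A$3} \<Longrightarrow>
      \<exists>c. x - y = c *\<^sub>R w"
    unfolding collinear_def by blast
  have rows_in_set: "A$i \<in> {A$1, A$2, A$3}" for i
    using exhaust_3[of i] by auto
  have "A$i \<in> span {w}" for i
  proof -
    have "(\<Sum>j\<in>UNIV. A$i - A$j) \<in> span {w}"
      using w[OF rows_in_set rows_in_set]
      by (intro span_sum) (metis span_base span_scale singletonI)
    moreover have "(\<Sum>j\<in>UNIV. A$i - A$j) = 3 *\<^sub>R A$i"
      using normalized3_rows_centered[OF assms]
      by (simp add: sum_subtractf sum_constant_scaleR del: sum_constant)
    ultimately have "(1 / 3) *\<^sub>R (3 *\<^sub>R A$i) \<in> span {w}"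
      by (metis span_scale)
    then show ?thesis
      by simp
  qed
  then have "rows A \<subseteq> span {w}"
    by (auto simp: rows_def row_def vec_lambda_eta)
  then have "rank A \<le> 1"
    using dim_le_card[of "rows A" "{w}"] by (simp add: row_rank_def)
  moreover have "rank S \<le> rank A"
    using rank_mul_le_right[of A "transpose A"] assms(2) by (simp add: rank_transpose)
  ultimately show False
    using assms(1) by (simp add: normalized3_def)
qed

lemma inj_rows_of_not_collinear:
  fixes A :: "'a::real_vector^3"
  assumes "\<not> collinear {A$1, A$2, A$3}"
  shows "inj (vec_nth A)"
proof
  fix i j assume "A$i = A$j"
  then show "i = j"
    using assms exhaust_3[of i] exhaust_3[of j] by (auto simp: insert_commute)
qed

lemma measurable_affine [measurable]:
  "(\<lambda>z. mu + A *v z) \<in> borel_measurable (borel :: (real^'n::finite) measure)"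
  by (intro borel_measurable_continuous_onI continuous_intros linear_continuous_on
      linear_conv_bounded_linear[THEN iffD1] matrix_vector_mul_linear)

lemma prob_space_gauss3: "prob_space (gauss3 mu A)"
  unfolding gauss3_def std_gauss3_eq_std_gauss by (rule std_gauss.prob_space_distr) simp

lemma sets_gauss3 [simp, measurable_cong]: "sets (gauss3 mu A) = sets borel"
  by (simp add: gauss3_def)

lemma measure_gauss3:
  "E \<in> sets borel \<Longrightarrow> measure (gauss3 mu A) E = measure std_gauss ((\<lambda>z. mu + A *v z) -` E)"
  unfolding gauss3_def std_gauss3_eq_std_gauss by (subst measure_distr) auto

lemma vimage_affine_le_halfspace:
  assumes "A$i \<noteq> A$j"
  shows "(\<lambda>z. mu + A *v z) -` {x. x$j \<le> x$i}
    = halfspace (sgn (A$i - A$j)) ((mu$j - mu$i) / norm (A$i - A$j))"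
proof -
  have "(\<lambda>z. mu + A *v z) -` {x. x$j \<le> x$i} = halfspace (A$i - A$j) (mu$j - mu$i)"
    by (auto simp: halfspace_def matrix_vector_mul_component inner_diff_left)
  then show ?thesis
    using assms by (simp add: halfspace_sgn)
qed

lemma ord_prob_eq_measure_wedge:
  assumes "A$i \<noteq> A$j" "A$j \<noteq> A$k"
  shows "ord_prob mu A i j k = measure std_gauss
    (halfspace (sgn (A$i - A$j)) ((mu$j - mu$i) / norm (A$i - A$j)) \<inter>
     halfspace (sgn (A$j - A$k)) ((mu$k - mu$j) / norm (A$j - A$k)))"
proof -
  have split: "{x. x$i \<ge> x$j \<and> x$j \<ge> x$k} = {x. x$j \<le> x$i} \<inter> {x. x$k \<le> x$j}"
    by auto
  have borel: "{x. x$j \<le> x$i} \<inter> {x. x$k \<le> x$j} \<in> sets (borel :: (real^3) measure)"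
    by measurable
  show ?thesis
    unfolding ord_prob_def split measure_gauss3[OF borel] vimage_Int
      vimage_affine_le_halfspace[OF assms(1)] vimage_affine_le_halfspace[OF assms(2)] ..
qed

lemma diagonal_null_sets_gauss3:
  assumes "A$p \<noteq> A$q"
  shows "{x. x$p = x$q} \<in> null_sets (gauss3 mu A)"
proof -
  have "(\<lambda>z. mu + A *v z) -` {x. x$p = x$q} = {z. (A$p - A$q) \<bullet> z = mu$q - mu$p}"
    by (auto simp: matrix_vector_mul_component inner_diff_left)
  then show ?thesis
    using hyperplane_null_sets_std_gauss[of "A$p - A$q"] assms
    by (simp add: gauss3_def std_gauss3_eq_std_gauss null_sets_distr_iff)
qed

lemma measure_gauss3_le_eq_sum_ord_prob:
  assumes "inj (vec_nth A)" "i \<noteq> j" "j \<noteq> k" "i \<noteq> k"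
  shows "measure (gauss3 mu A) {x. x$j \<le> x$i}
    = ord_prob mu A i j k + ord_prob mu A i k j + ord_prob mu A k i j"
proof -
  interpret prob_space "gauss3 mu A"
    by (rule prob_space_gauss3)
  let ?C1 = "{x::real^3. x$i \<ge> x$j \<and> x$j \<ge> x$k}" and ?C2 = "{x::real^3. x$i \<ge> x$k \<and> x$k \<ge> x$j}"
    and ?C3 = "{x::real^3. x$k \<ge> x$i \<and> x$i \<ge> x$j}"
  have null: "{x. x$p = x$q} \<in> null_sets (gauss3 mu A)" if "p \<noteq> q" for p q
    using assms(1) that by (intro diagonal_null_sets_gauss3) (auto dest: injD)
  have "AE x in gauss3 mu A. x \<notin> ?C1 \<or> x \<notin> ?C2"
    using AE_not_in[OF null[OF assms(3)]] by eventually_elim auto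
  moreover have "AE x in gauss3 mu A. x \<notin> ?C1 \<union> ?C2 \<or> x \<notin> ?C3"
    using AE_not_in[OF null[OF assms(4)]] by eventually_elim auto
  moreover have "{x. x$j \<le> x$i} = (?C1 \<union> ?C2) \<union> ?C3"
    by auto
  ultimately show ?thesis
    unfolding ord_prob_def
    by (simp add: measure_Un_AE fmeasurable_eq_sets del: Un_iff)
qed

lemma third_index_3:
  fixes i j :: 3
  obtains k where "k \<noteq> i" "k \<noteq> j"
proof -
  have "card {i, j} < CARD(3)"
    by (simp add: card_insert_if)
  then have "{i, j} \<noteq> UNIV"
    by auto
  then show ?thesis
    using that by blast
qed

lemma threshold_eq_of_ord_prob_eq:
  assumes "inj (vec_nth A)" "inj (vec_nth A')"
    and "\<And>i j k. i \<noteq> j \<Longrightarrow> j \<noteq> k \<Longrightarrow> i \<noteq> k \<Longrightarrow> ord_prob mu A i j k = ord_prob mu' A' i j k"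
    and "i \<noteq> j"
  shows "(mu$j - mu$i) / norm (A$i - A$j) = (mu'$j - mu'$i) / norm (A'$i - A'$j)"
proof (rule threshold_eq_of_measure_halfspace_eq)
  have neq: "A$i \<noteq> A$j" "A'$i \<noteq> A'$j"
    using assms by (auto dest: injD)
  then show "sgn (A$i - A$j) \<noteq> 0" "norm (sgn (A$i - A$j)) = norm (sgn (A'$i - A'$j))"
    by (simp_all add: sgn_zero_iff norm_sgn)
  obtain k where "k \<noteq> i" "k \<noteq> j"
    by (rule third_index_3)
  then have eq: "measure (gauss3 mu A) {x. x$j \<le> x$i} = measure (gauss3 mu' A') {x. x$j \<le> x$i}"
    using assms measure_gauss3_le_eq_sum_ord_prob[where A = A and i = i and j = j and k = k]
      measure_gauss3_le_eq_sum_ord_prob[where A = A' and i = i and j = j and k = k]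
    by simp
  have borel: "{x. x$j \<le> x$i} \<in> sets (borel :: (real^3) measure)"
    by measurable
  show "measure std_gauss (halfspace (sgn (A$i - A$j)) ((mu$j - mu$i) / norm (A$i - A$j)))
    = measure std_gauss (halfspace (sgn (A'$i - A'$j)) ((mu'$j - mu'$i) / norm (A'$i - A'$j)))"
    using eq unfolding measure_gauss3[OF borel] vimage_affine_le_halfspace[OF neq(1)]
      vimage_affine_le_halfspace[OF neq(2)] .
qed

lemma angle_eq_of_ord_prob_eq:
  assumes inj: "inj (vec_nth A)" "inj (vec_nth A')"
    and ord: "\<And>i j k. i \<noteq> j \<Longrightarrow> j \<noteq> k \<Longrightarrow> i \<noteq> k \<Longrightarrow> ord_prob mu A i j k = ord_prob mu' A' i j k"
    and ijk: "i \<noteq> j" "j \<noteq> k" "i \<noteq> k"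
  shows "sgn (A$i - A$j) \<bullet> sgn (A$j - A$k) = sgn (A'$i - A'$j) \<bullet> sgn (A'$j - A'$k)"
proof (rule inner_eq_of_measure_wedge_eq)
  have neq: "A$i \<noteq> A$j" "A$j \<noteq> A$k" "A'$i \<noteq> A'$j" "A'$j \<noteq> A'$k"
    using inj ijk by (auto dest: injD)
  then show "norm (sgn (A$i - A$j)) = norm (sgn (A'$i - A'$j))"
    "norm (sgn (A$j - A$k)) = norm (sgn (A'$j - A'$k))"
    by (simp_all add: norm_sgn)
  show "measure std_gauss
      (halfspace (sgn (A$i - A$j)) ((mu$j - mu$i) / norm (A$i - A$j)) \<inter>
       halfspace (sgn (A$j - A$k)) ((mu$k - mu$j) / norm (A$j - A$k))) =
    measure std_gauss
      (halfspace (sgn (A'$i - A'$j)) ((mu$j - mu$i) / norm (A$i - A$j)) \<inter>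
       halfspace (sgn (A'$j - A'$k)) ((mu$k - mu$j) / norm (A$j - A$k)))"
    using ord[OF ijk(1,2,3)] neq threshold_eq_of_ord_prob_eq[OF inj ord ijk(1)]
      threshold_eq_of_ord_prob_eq[OF inj ord ijk(2)]
    by (simp add: ord_prob_eq_measure_wedge)
qed

lemma dist_rows_eq_of_ord_prob_eq:
  fixes mu mu' :: "real^3" and S S' A A' :: "real^3^3"
  assumes N: "normalized3 mu S" and N': "normalized3 mu' S'"
    and AS: "A ** transpose A = S" and AS': "A' ** transpose A' = S'"
    and ord: "\<And>i j k. i \<noteq> j \<Longrightarrow> j \<noteq> k \<Longrightarrow> i \<noteq> k \<Longrightarrow> ord_prob mu A i j k = ord_prob mu' A' i j k"
  shows "dist (A$i) (A$j) = dist (A'$i) (A'$j)"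
proof -
  have noncollinear: "\<not> collinear {A$1, A$2, A$3}" "\<not> collinear {A'$1, A'$2, A'$3}"
    using normalized3_rows_not_collinear N N' AS AS' by blast+
  note angle = angle_eq_of_ord_prob_eq[OF inj_rows_of_not_collinear[OF noncollinear(1)]
      inj_rows_of_not_collinear[OF noncollinear(2)] ord]
  have size: "(dist (B$1) (B$2))\<^sup>2 + (dist (B$2) (B$3))\<^sup>2 + (dist (B$1) (B$3))\<^sup>2 = 9"
    if "normalized3 m T" "B ** transpose B = T" for m T and B :: "real^3^3"
    using sum_sum_dist_sq_centered[OF normalized3_rows_centered[OF that]]
      normalized3_rows_norm_sum[OF that]
    by (simp add: sum_3 dist_commute)
  have "dist (A$1) (A$2) = dist (A'$1) (A'$2)" "dist (A$2) (A$3) = dist (A'$2) (A'$3)"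
    "dist (A$1) (A$3) = dist (A'$1) (A'$3)"
    using triangle_congruent_of_angles_eq[OF noncollinear(1) angle angle angle]
      size[OF N AS] size[OF N' AS'] by simp_all
  then show ?thesis
    using exhaust_3[of i] exhaust_3[of j] by (auto simp: dist_commute)
qed

theorem theorem2:
  fixes mu mu' :: "real^3" and S S' A A' :: "real^3^3"
  assumes "normalized3 mu S" and "normalized3 mu' S'"
    and "A ** transpose A = S" and "A' ** transpose A' = S'"
    and "\<And>i j k. i \<noteq> j \<Longrightarrow> j \<noteq> k \<Longrightarrow> i \<noteq> k \<Longrightarrow>
           ord_prob mu A i j k = ord_prob mu' A' i j k"
  shows "mu = mu' \<and> S = S'"
proof
  have dist: "dist (A$i) (A$j) = dist (A'$i) (A'$j)" for i j
    using dist_rows_eq_of_ord_prob_eq[OF assms] .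
  show "S = S'"
    using inner_eq_of_dist_eq_centered[OF normalized3_rows_centered normalized3_rows_centered dist]
      assms(1-4) by (auto simp: vec_eq_iff matrix_mult_transpose_nth)
  have inj: "inj (vec_nth A)" "inj (vec_nth A')"
    using inj_rows_of_not_collinear normalized3_rows_not_collinear assms(1-4) by blast+
  show "mu = mu'"
  proof (rule vec_eq_of_sum_eq_of_diff_eq)
    show "(\<Sum>i\<in>UNIV. mu$i) = (\<Sum>i\<in>UNIV. mu'$i)"
      using assms(1,2) by (simp add: normalized3_def)
    show "mu$j - mu$i = mu'$j - mu'$i" for i j
    proof (cases "i = j")
      case False
      then have "A$i \<noteq> A$j" "A'$i \<noteq> A'$j"
        using inj by (auto dest: injD)
      then show ?thesis
        using threshold_eq_of_ord_prob_eq[OF inj assms(5) False] dist[of i j] by (simp add: dist_norm)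
    qed simp
  qed
qed

end
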